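(* Consider the Cartesian stochastic variational inequality setting described in the context, with unique solution $x^*$ of VI$(X,F)$, and let $\{\delta_k\}$, $\{\Gamma_k\}$ be positive sequences with $\delta_k\le\min_{1\le i\le N}\gamma_{k,i}$ and $\Gamma_k\ge\max_{1\le i\le N}\gamma_{k,i}$ for all $k$. (a) Almost surely, for all $k\ge0$, $$\mathsf E[\|x_{k+1}-x^*\|^2\mid\mathcal F_k]\le(1-2(\eta+L)\delta_k+2L\Gamma_k+L^2\Gamma_k^2)\|x_k-x^*\|^2+\Gamma_k^2\nu^2.$$ (b) If moreover $\frac{\Gamma_k-\delta_k}{\delta_k}\le\beta$ for all $k\ge0$, where $0\le\beta<\frac{\eta}{L}$, then for all $k\ge0$, $$\mathsf E[\|x_{k+1}-x^*\|^2]\le(1-2(\eta-\beta L)\delta_k+(1+\beta)^2L^2\delta_k^2)\mathsf E[\|x_k-x^*\|^2]+(1+\beta)^2\delta_k^2\nu^2.$$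
   Context: Let $N\ge1$, $n_1,\dots,n_N\ge1$, $n=\sum_i n_i$, and $X=\prod_{i=1}^N X_i$ where each $X_i\subseteq\mathbb R^{n_i}$ is nonempty, closed and convex. For random vectors $\xi_i$ and functions $\Phi_i$, let $F_i(x)=\mathsf E[\Phi_i(x,\xi_i)]\in\mathbb R^{n_i}$ and $F=(F_1;\dots;F_N):X\to\mathbb R^n$. VI$(X,F)$ asks for $x^*\in X$ with $(x-x^* )^TF(x^* )\ge0$ for all $x\in X$. Assume $F$ is single-valued and Lipschitz continuous on $X$ with constant $L>0$, and strongly monotone on $X$ with constant $\eta>0$, i.e. $(F(x)-F(y))^T(x-y)\ge\eta\|x-y\|^2$ for all $x,y\in X$. $\Pi_{X_i}$ is the Euclidean projection onto $X_i$. The distributed scheme is: $x_0\in X$ random, independent of all other randomness, with $\mathsf E\|x_0\|^2<\infty$, and for $k\ge0$, $i=1,\dots,N$, $x_{k+1,i}=\Pi_{X_i}(x_{k,i}-\gamma_{k,i}(F_i(x_k)+w_{k,i}))$ with deterministic stepsizes $\gamma_{k,i}>0$ and $w_{k,i}=\Phi_i(x_k,\xi_{k,i})-F_i(x_k)$, where $x_k=(x_{k,1};\dots;x_{k,N})$. With $\mathcal F_k=\{x_0,\xi_0,\dots,\xi_{k-1}\}$, $\mathsf E[w_{k,i}\mid\mathcal F_k]=0$ for all $k,i$, and there is a deterministic $\nu>0$ with $\mathsf E[\|w_k\|^2\mid\mathcal F_k]\le\nu^2$ a.s. for all $k$, where $w_k=(w_{k,1};\dots;w_{k,N})$. *)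

theory Defs
  imports "HOL-Probability.Probability"
begin

text \<open>Coordinates of R^n are the finite type 'c; the block structure
  R^n = R^{n_1} x ... x R^{n_N} is given by blk :: 'c => 'i (coordinate c lies in block blk c).
  A block vector x_i is represented as the vector of real^'c that agrees with x on
  block i and is zero elsewhere.\<close>

definition blockproj :: "('c::finite \<Rightarrow> 'i) \<Rightarrow> 'i \<Rightarrow> real^'c \<Rightarrow> real^'c" where
  "blockproj blk i x = (\<chi> c. if blk c = i then x $ c else 0)"

definition block_space :: "('c::finite \<Rightarrow> 'i) \<Rightarrow> 'i \<Rightarrow> (real^'c) set" where
  "block_space blk i = {v. \<forall>c. blk c \<noteq> i \<longrightarrow> v $ c = 0}"

definition cart_prod :: "('c::finite \<Rightarrow> 'i) \<Rightarrow> ('i \<Rightarrow> (real^'c) set) \<Rightarrow> (real^'c) set" where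
  "cart_prod blk Xb = {x. \<forall>i. blockproj blk i x \<in> Xb i}"

definition VI_sol :: "(real^'c::finite) set \<Rightarrow> (real^'c \<Rightarrow> real^'c) \<Rightarrow> real^'c \<Rightarrow> bool" where
  "VI_sol X F xs \<longleftrightarrow> xs \<in> X \<and> (\<forall>x\<in>X. (x - xs) \<bullet> F xs \<ge> 0)"

definition gen_filt :: "'a measure \<Rightarrow> ('a \<Rightarrow> real^'c::finite) \<Rightarrow> 's measure
    \<Rightarrow> (nat \<Rightarrow> 'i \<Rightarrow> 'a \<Rightarrow> 's) \<Rightarrow> nat \<Rightarrow> 'a measure" where
  "gen_filt M x0 S \<xi> k = sigma (space M)
     ({x0 -` A \<inter> space M | A. A \<in> sets borel} \<union>
      {\<xi> j i -` B \<inter> space M | j i B. j < k \<and> B \<in> sets S})"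

end

theory Submission
  imports Defs
begin

text \<open>Since each \<open>X\<^sub>i\<close> is convex and \<open>x\<^sup>*\<close> solves the VI on the product set, every block of
  \<open>x\<^sup>*\<close> is a fixed point of the projected step: \<open>x\<^sup>*\<^sub>i = \<Pi>\<^sub>X\<^sub>i(x\<^sup>*\<^sub>i - t F\<^sub>i(x\<^sup>*))\<close> for all \<open>t \<ge> 0\<close>.
  Nonexpansiveness of the projections therefore bounds \<open>\<parallel>x\<^sub>k\<^sub>+\<^sub>1 - x\<^sup>*\<parallel>\<^sup>2\<close> by
  \<open>\<Sum>\<^sub>i \<parallel>a\<^sub>k\<^sub>,\<^sub>i - \<gamma>\<^sub>k\<^sub>,\<^sub>i w\<^sub>k\<^sub>,\<^sub>i\<parallel>\<^sup>2\<close> with the deterministic drift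
  \<open>a\<^sub>k\<^sub>,\<^sub>i = (x\<^sub>k - x\<^sup>*)\<^sub>i - \<gamma>\<^sub>k\<^sub>,\<^sub>i (F(x\<^sub>k) - F(x\<^sup>*))\<^sub>i\<close>. Expanding the square, the drift part is at most
  \<open>(1 - 2(\<eta>+L)\<delta>\<^sub>k + 2L\<Gamma>\<^sub>k + L\<^sup>2\<Gamma>\<^sub>k\<^sup>2) \<parallel>x\<^sub>k - x\<^sup>*\<parallel>\<^sup>2\<close>: writing \<open>\<gamma>\<^sub>k\<^sub>,\<^sub>i = \<delta>\<^sub>k + (\<gamma>\<^sub>k\<^sub>,\<^sub>i - \<delta>\<^sub>k)\<close>, strong
  monotonicity controls the \<open>\<delta>\<^sub>k\<close> part and the Lipschitz bound the blockwise excess of size at most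
  \<open>\<Gamma>\<^sub>k - \<delta>\<^sub>k\<close>. The noise part is at most \<open>\<Gamma>\<^sub>k\<^sup>2 \<parallel>w\<^sub>k\<parallel>\<^sup>2\<close>, and the cross term has conditional mean zero
  because its coefficients are \<open>F\<^sub>k\<close>-measurable. Conditioning on \<open>F\<^sub>k\<close> gives (a); integrating and using
  \<open>\<Gamma>\<^sub>k \<le> (1 + \<beta>) \<delta>\<^sub>k\<close> gives (b).\<close>

lemma blockproj_nth [simp]: "blockproj blk i v $ c = (if blk c = i then v $ c else 0)"
  by (simp add: blockproj_def)

lemma blockproj_diff: "blockproj blk i (u - v) = blockproj blk i u - blockproj blk i v"
  by (simp add: vec_eq_iff)

lemma blockproj_add: "blockproj blk i (u + v) = blockproj blk i u + blockproj blk i v"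
  by (simp add: vec_eq_iff)

lemma blockproj_scaleR: "blockproj blk i (a *\<^sub>R v) = a *\<^sub>R blockproj blk i v"
  by (simp add: vec_eq_iff)

lemma blockproj_idem [simp]: "blockproj blk i (blockproj blk i v) = blockproj blk i v"
  by (simp add: vec_eq_iff)

lemma bounded_linear_blockproj: "bounded_linear (blockproj blk i)"
proof -
  have "linear (blockproj blk i)"
    by (rule linearI) (simp_all add: blockproj_add blockproj_scaleR)
  then show ?thesis
    by (simp add: linear_conv_bounded_linear)
qed

lemma continuous_on_blockproj [continuous_intros]:
  "continuous_on S f \<Longrightarrow> continuous_on S (\<lambda>x. blockproj blk i (f x))"
  by (rule continuous_on_compose2[OF linear_continuous_on[OF bounded_linear_blockproj]]) auto

lemma blockproj_block_space:
  "v \<in> block_space blk i \<Longrightarrow> blockproj blk j v = (if j = i then v else 0)"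
  by (auto simp: block_space_def vec_eq_iff)

lemma inner_blockproj_left: "blockproj blk i v \<bullet> u = blockproj blk i v \<bullet> blockproj blk i u"
  unfolding inner_vec_def by (rule sum.cong) auto

lemma sum_blockproj:
  fixes blk :: "'c::finite \<Rightarrow> 'i::finite"
  shows "(\<Sum>i\<in>UNIV. blockproj blk i v) = v"
  by (simp add: vec_eq_iff sum_component if_distrib cong: if_cong)

lemma sum_inner_blockproj:
  fixes blk :: "'c::finite \<Rightarrow> 'i::finite"
  shows "(\<Sum>i\<in>UNIV. blockproj blk i u \<bullet> blockproj blk i v) = u \<bullet> v"
proof -
  have "(\<Sum>i\<in>UNIV. blockproj blk i u \<bullet> blockproj blk i v)
      = (\<Sum>i\<in>UNIV. \<Sum>c\<in>UNIV. if blk c = i then u $ c * v $ c else 0)"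
    by (simp add: inner_vec_def if_distrib cong: if_cong)
  also have "\<dots> = (\<Sum>c\<in>UNIV. \<Sum>i\<in>(UNIV::'i set). if blk c = i then u $ c * v $ c else 0)"
    by (rule sum.swap)
  also have "\<dots> = u \<bullet> v"
    by (simp add: inner_vec_def)
  finally show ?thesis .
qed

lemma sum_norm_blockproj:
  fixes blk :: "'c::finite \<Rightarrow> 'i::finite"
  shows "(\<Sum>i\<in>UNIV. (norm (blockproj blk i u))\<^sup>2) = (norm u)\<^sup>2"
  using sum_inner_blockproj[of blk u u] by (simp add: power2_norm_eq_inner)

lemma norm_blockproj_le:
  fixes blk :: "'c::finite \<Rightarrow> 'i::finite"
  shows "norm (blockproj blk i u) \<le> norm u"
proof -
  have "(norm (blockproj blk i u))\<^sup>2 \<le> (\<Sum>j\<in>UNIV. (norm (blockproj blk j u))\<^sup>2)"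
    by (rule member_le_sum) auto
  then have "(norm (blockproj blk i u))\<^sup>2 \<le> (norm u)\<^sup>2"
    by (simp add: sum_norm_blockproj)
  then show ?thesis
    by (rule power2_le_imp_le) simp
qed

lemma blockproj_sum_block_space:
  fixes blk :: "'c::finite \<Rightarrow> 'i::finite"
  assumes "\<And>i. w i \<in> block_space blk i"
  shows "blockproj blk j (\<Sum>i\<in>UNIV. w i) = w j"
proof -
  have "blockproj blk j (\<Sum>i\<in>UNIV. w i) = (\<Sum>i\<in>UNIV. blockproj blk j (w i))"
    by (rule linear_sum[OF bounded_linear.linear[OF bounded_linear_blockproj]])
  also have "\<dots> = w j"
    by (simp add: blockproj_block_space[OF assms])
  finally show ?thesis .
qed

lemma sum_weighted_norm_blockproj_le:
  fixes blk :: "'c::finite \<Rightarrow> 'i::finite"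
  assumes "\<And>i. 0 \<le> \<gamma> i" "\<And>i. \<gamma> i \<le> \<Gamma>"
  shows "(\<Sum>i\<in>UNIV. (\<gamma> i)\<^sup>2 * (norm (blockproj blk i v))\<^sup>2) \<le> \<Gamma>\<^sup>2 * (norm v)\<^sup>2"
proof -
  have "(\<Sum>i\<in>UNIV. (\<gamma> i)\<^sup>2 * (norm (blockproj blk i v))\<^sup>2) \<le> (\<Sum>i\<in>UNIV. \<Gamma>\<^sup>2 * (norm (blockproj blk i v))\<^sup>2)"
    using assms by (intro sum_mono mult_right_mono power_mono) auto
  then show ?thesis
    by (simp add: sum_distrib_left[symmetric] sum_norm_blockproj)
qed

lemma closest_point_step_fixed:
  fixes p g :: "'a::euclidean_space"
  assumes "convex S" "closed S" "p \<in> S" "\<And>z. z \<in> S \<Longrightarrow> 0 \<le> (z - p) \<bullet> g" "0 \<le> t"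
  shows "closest_point S (p - t *\<^sub>R g) = p"
proof (rule closest_point_unique[OF assms(1-3), symmetric], intro ballI)
  fix z assume "z \<in> S"
  have "(norm (p - t *\<^sub>R g - z))\<^sup>2 = (norm (p - z))\<^sup>2 + 2 * t * ((z - p) \<bullet> g) + (norm (t *\<^sub>R g))\<^sup>2"
    unfolding power2_norm_eq_inner by (simp add: inner_diff_left inner_diff_right inner_commute algebra_simps)
  also have "\<dots> \<ge> (norm (t *\<^sub>R g))\<^sup>2"
    using assms(4)[OF \<open>z \<in> S\<close>] \<open>0 \<le> t\<close> by simp
  finally have "norm (t *\<^sub>R g) \<le> norm (p - t *\<^sub>R g - z)"
    by (rule power2_le_imp_le) simp
  then show "dist (p - t *\<^sub>R g) p \<le> dist (p - t *\<^sub>R g) z"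
    by (simp add: dist_norm)
qed

lemma VI_sol_cart_prod_blockwise:
  assumes "\<And>i. Xb i \<subseteq> block_space blk i" "VI_sol (cart_prod blk Xb) F xs" "z \<in> Xb i"
  shows "0 \<le> (z - blockproj blk i xs) \<bullet> blockproj blk i (F xs)"
proof -
  have z: "z \<in> block_space blk i"
    using assms(1,3) by blast
  define y where "y = xs - blockproj blk i xs + z"
  have y_blocks: "blockproj blk j y = (if j = i then z else blockproj blk j xs)" for j
    using blockproj_block_space[OF z, of j]
    by (auto simp: y_def blockproj_add blockproj_diff vec_eq_iff)
  have "y \<in> cart_prod blk Xb"
    using assms(2,3) by (simp add: cart_prod_def VI_sol_def y_blocks)
  then have "0 \<le> (y - xs) \<bullet> F xs"
    using assms(2) by (simp add: VI_sol_def)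
  also have "y - xs = blockproj blk i (z - blockproj blk i xs)"
    using blockproj_block_space[OF z, of i] by (simp add: y_def blockproj_diff)
  also have "blockproj blk i (z - blockproj blk i xs) \<bullet> F xs = (z - blockproj blk i xs) \<bullet> blockproj blk i (F xs)"
    using inner_blockproj_left[of blk i "z - blockproj blk i xs" "F xs"]
    by (simp add: blockproj_block_space[OF z] blockproj_diff)
  finally show ?thesis .
qed

lemma VI_sol_cart_prod_fixed_point:
  assumes "\<And>i. Xb i \<subseteq> block_space blk i" "\<And>i. closed (Xb i)" "\<And>i. convex (Xb i)"
    and "VI_sol (cart_prod blk Xb) F xs" "0 \<le> t"
  shows "closest_point (Xb i) (blockproj blk i xs - t *\<^sub>R blockproj blk i (F xs)) = blockproj blk i xs"
proof (rule closest_point_step_fixed[OF assms(3,2)])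
  show "blockproj blk i xs \<in> Xb i"
    using assms(4) by (simp add: VI_sol_def cart_prod_def)
qed (use VI_sol_cart_prod_blockwise[OF assms(1,4)] assms(5) in auto)

lemma abs_inner_le_weighted_squares:
  fixes a b :: "'a::real_inner"
  assumes "0 < L"
  shows "2 * \<bar>a \<bullet> b\<bar> \<le> L * (norm a)\<^sup>2 + (norm b)\<^sup>2 / L"
proof -
  have "2 * L * (norm a * norm b) \<le> (L * norm a)\<^sup>2 + (norm b)\<^sup>2"
    using sum_squares_ge_zero[of "L * norm a - norm b" 0] by (simp add: power2_eq_square algebra_simps)
  then have "2 * (norm a * norm b) \<le> L * (norm a)\<^sup>2 + (norm b)\<^sup>2 / L"
    using assms by (simp add: field_simps power2_eq_square)
  moreover have "\<bar>a \<bullet> b\<bar> \<le> norm a * norm b"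
    by (rule Cauchy_Schwarz_ineq2)
  ultimately show ?thesis
    by linarith
qed

lemma power2_norm_diff_le:
  fixes a b :: "'a::real_normed_vector"
  shows "(norm (a - b))\<^sup>2 \<le> 2 * (norm a)\<^sup>2 + 2 * (norm b)\<^sup>2"
proof -
  have "(norm (a - b))\<^sup>2 \<le> (norm a + norm b)\<^sup>2"
    by (rule power_mono[OF norm_triangle_ineq4 norm_ge_zero])
  also have "\<dots> \<le> 2 * (norm a)\<^sup>2 + 2 * (norm b)\<^sup>2"
    using sum_squares_ge_zero[of "norm a - norm b" 0] by (simp add: power2_eq_square algebra_simps)
  finally show ?thesis .
qed

lemma sum_abs_inner_blockproj_le:
  fixes blk :: "'c::finite \<Rightarrow> 'i::finite"
  assumes "0 < L" "norm f \<le> L * norm d"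
  shows "(\<Sum>i\<in>UNIV. \<bar>blockproj blk i d \<bullet> blockproj blk i f\<bar>) \<le> L * (norm d)\<^sup>2"
proof -
  have "2 * (\<Sum>i\<in>UNIV. \<bar>blockproj blk i d \<bullet> blockproj blk i f\<bar>)
      \<le> (\<Sum>i\<in>UNIV. L * (norm (blockproj blk i d))\<^sup>2 + (norm (blockproj blk i f))\<^sup>2 / L)"
    unfolding sum_distrib_left by (intro sum_mono abs_inner_le_weighted_squares assms(1))
  also have "\<dots> = L * (norm d)\<^sup>2 + (norm f)\<^sup>2 / L"
    by (simp add: sum.distrib sum_distrib_left[symmetric] sum_divide_distrib[symmetric] sum_norm_blockproj)
  also have "(norm f)\<^sup>2 / L \<le> L * (norm d)\<^sup>2"
  proof -
    have "(norm f)\<^sup>2 \<le> (L * norm d)\<^sup>2"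
      by (rule power_mono[OF assms(2)]) simp
    then show ?thesis
      using assms(1) by (simp add: pos_divide_le_eq power_mult_distrib power2_eq_square mult_ac)
  qed
  finally show ?thesis
    by linarith
qed

lemma sum_weighted_inner_blockproj_ge:
  fixes blk :: "'c::finite \<Rightarrow> 'i::finite"
  assumes "0 < L" "norm f \<le> L * norm d" "\<eta> * (norm d)\<^sup>2 \<le> f \<bullet> d"
    and "0 \<le> \<delta>" "\<And>i. \<delta> \<le> \<gamma> i" "\<And>i. \<gamma> i \<le> \<Gamma>"
  shows "(\<delta> * \<eta> - (\<Gamma> - \<delta>) * L) * (norm d)\<^sup>2
           \<le> (\<Sum>i\<in>UNIV. \<gamma> i * (blockproj blk i d \<bullet> blockproj blk i f))"
proof -
  let ?p = "\<lambda>i. blockproj blk i d \<bullet> blockproj blk i f"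
  have "\<delta> * (\<eta> * (norm d)\<^sup>2) \<le> \<delta> * (\<Sum>i\<in>UNIV. ?p i)"
    using assms(3,4) by (simp add: sum_inner_blockproj inner_commute mult_left_mono)
  moreover have "- ((\<Gamma> - \<delta>) * \<bar>?p i\<bar>) \<le> (\<gamma> i - \<delta>) * ?p i" for i
  proof -
    have "\<bar>(\<gamma> i - \<delta>) * ?p i\<bar> \<le> (\<Gamma> - \<delta>) * \<bar>?p i\<bar>"
      unfolding abs_mult using assms(5,6)[of i] by (intro mult_right_mono) auto
    then show ?thesis
      by linarith
  qed
  then have "- ((\<Gamma> - \<delta>) * (\<Sum>i\<in>UNIV. \<bar>?p i\<bar>)) \<le> (\<Sum>i\<in>UNIV. (\<gamma> i - \<delta>) * ?p i)"
    by (simp add: sum_distrib_left sum_negf[symmetric] sum_mono)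
  moreover have "(\<Gamma> - \<delta>) * (\<Sum>i\<in>UNIV. \<bar>?p i\<bar>) \<le> (\<Gamma> - \<delta>) * (L * (norm d)\<^sup>2)"
    using sum_abs_inner_blockproj_le[OF assms(1,2)] assms(5,6)[of undefined]
    by (intro mult_left_mono) auto
  ultimately show ?thesis
    by (simp add: algebra_simps sum.distrib sum_subtractf sum_distrib_left)
qed

lemma blockwise_step_contraction:
  fixes blk :: "'c::finite \<Rightarrow> 'i::finite"
  assumes "0 < L" "norm f \<le> L * norm d" "\<eta> * (norm d)\<^sup>2 \<le> f \<bullet> d"
    and "0 \<le> \<delta>" "\<And>i. \<delta> \<le> \<gamma> i" "\<And>i. \<gamma> i \<le> \<Gamma>"
  shows "(\<Sum>i\<in>UNIV. (norm (blockproj blk i d - \<gamma> i *\<^sub>R blockproj blk i f))\<^sup>2)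
           \<le> (1 - 2 * (\<eta> + L) * \<delta> + 2 * L * \<Gamma> + L\<^sup>2 * \<Gamma>\<^sup>2) * (norm d)\<^sup>2"
proof -
  have "(norm (blockproj blk i d - \<gamma> i *\<^sub>R blockproj blk i f))\<^sup>2
      = (norm (blockproj blk i d))\<^sup>2 - 2 * (\<gamma> i * (blockproj blk i d \<bullet> blockproj blk i f))
        + (\<gamma> i)\<^sup>2 * (norm (blockproj blk i f))\<^sup>2" for i
    unfolding power2_norm_eq_inner by (simp add: inner_diff_left inner_diff_right inner_commute power2_eq_square)
  then have "(\<Sum>i\<in>UNIV. (norm (blockproj blk i d - \<gamma> i *\<^sub>R blockproj blk i f))\<^sup>2)
      = (norm d)\<^sup>2 - 2 * (\<Sum>i\<in>UNIV. \<gamma> i * (blockproj blk i d \<bullet> blockproj blk i f))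
        + (\<Sum>i\<in>UNIV. (\<gamma> i)\<^sup>2 * (norm (blockproj blk i f))\<^sup>2)"
    by (simp add: sum.distrib sum_subtractf sum_distrib_left sum_norm_blockproj)
  also have "\<dots> \<le> (norm d)\<^sup>2 - 2 * ((\<delta> * \<eta> - (\<Gamma> - \<delta>) * L) * (norm d)\<^sup>2) + \<Gamma>\<^sup>2 * (L\<^sup>2 * (norm d)\<^sup>2)"
  proof -
    have "(norm f)\<^sup>2 \<le> (L * norm d)\<^sup>2"
      by (rule power_mono[OF assms(2)]) simp
    then have "(norm f)\<^sup>2 \<le> L\<^sup>2 * (norm d)\<^sup>2"
      by (simp add: power_mult_distrib)
    then have "\<Gamma>\<^sup>2 * (norm f)\<^sup>2 \<le> \<Gamma>\<^sup>2 * (L\<^sup>2 * (norm d)\<^sup>2)"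
      by (rule mult_left_mono) simp
    moreover have "(\<Sum>i\<in>UNIV. (\<gamma> i)\<^sup>2 * (norm (blockproj blk i f))\<^sup>2) \<le> \<Gamma>\<^sup>2 * (norm f)\<^sup>2"
      using order_trans[OF assms(4,5)] assms(6) by (rule sum_weighted_norm_blockproj_le)
    ultimately have "(\<Sum>i\<in>UNIV. (\<gamma> i)\<^sup>2 * (norm (blockproj blk i f))\<^sup>2) \<le> \<Gamma>\<^sup>2 * (L\<^sup>2 * (norm d)\<^sup>2)"
      by linarith
    moreover have "(\<delta> * \<eta> - (\<Gamma> - \<delta>) * L) * (norm d)\<^sup>2
        \<le> (\<Sum>i\<in>UNIV. \<gamma> i * (blockproj blk i d \<bullet> blockproj blk i f))"
      using assms by (rule sum_weighted_inner_blockproj_ge)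
    ultimately show ?thesis
      by linarith
  qed
  also have "\<dots> = (1 - 2 * (\<eta> + L) * \<delta> + 2 * L * \<Gamma> + L\<^sup>2 * \<Gamma>\<^sup>2) * (norm d)\<^sup>2"
    by (simp add: algebra_simps)
  finally show ?thesis .
qed

lemma borel_measurable_continuous_on_into:
  assumes "continuous_on X \<phi>" "f \<in> borel_measurable N" "\<And>\<omega>. \<omega> \<in> space N \<Longrightarrow> f \<omega> \<in> X"
  shows "(\<lambda>\<omega>. \<phi> (f \<omega>)) \<in> borel_measurable N"
proof -
  have "f \<in> N \<rightarrow>\<^sub>M restrict_space borel X"
    by (rule measurable_restrict_space2) (use assms in auto)
  then show ?thesis
    using borel_measurable_continuous_on_restrict[OF assms(1)] by (rule measurable_compose)
qed

lemma space_gen_filt [simp]: "space (gen_filt M x0 S \<xi> k) = space M"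
  by (simp add: gen_filt_def space_measure_of_conv)

lemma sets_gen_filt:
  "sets (gen_filt M x0 S \<xi> k) = sigma_sets (space M)
     ({x0 -` A \<inter> space M | A. A \<in> sets borel} \<union> {\<xi> j i -` B \<inter> space M | j i B. j < k \<and> B \<in> sets S})"
  unfolding gen_filt_def by (rule sets_measure_of) blast

lemma subalgebra_gen_filt_Suc: "subalgebra (gen_filt M x0 S \<xi> (Suc k)) (gen_filt M x0 S \<xi> k)"
  unfolding subalgebra_def sets_gen_filt space_gen_filt
  by (intro conjI refl sigma_sets_mono') (blast intro: less_SucI)

lemma measurable_gen_filt_initial:
  fixes x0 :: "'a \<Rightarrow> real^'c::finite"
  shows "x0 \<in> borel_measurable (gen_filt M x0 S \<xi> k)"
proof (rule measurableI)
  fix A :: "(real^'c) set" assume "A \<in> sets borel"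
  then show "x0 -` A \<inter> space (gen_filt M x0 S \<xi> k) \<in> sets (gen_filt M x0 S \<xi> k)"
    unfolding sets_gen_filt space_gen_filt by blast
qed simp

lemma measurable_gen_filt_sample:
  assumes "\<xi> j i \<in> M \<rightarrow>\<^sub>M S" "j < k"
  shows "\<xi> j i \<in> gen_filt M x0 S \<xi> k \<rightarrow>\<^sub>M S"
proof (rule measurableI)
  fix B assume "B \<in> sets S"
  then show "\<xi> j i -` B \<inter> space (gen_filt M x0 S \<xi> k) \<in> sets (gen_filt M x0 S \<xi> k)"
    unfolding sets_gen_filt space_gen_filt using assms(2) by blast
qed (use measurable_space[OF assms(1)] in simp)

lemma subalgebra_gen_filt:
  assumes "x0 \<in> borel_measurable M" "\<And>j i. \<xi> j i \<in> M \<rightarrow>\<^sub>M S"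
  shows "subalgebra M (gen_filt M x0 S \<xi> k)"
  unfolding subalgebra_def sets_gen_filt space_gen_filt
  by (intro conjI refl sets.sigma_sets_subset) (use assms in \<open>auto simp: measurable_sets\<close>)

lemma (in prob_space) sigma_finite_subalgebra_gen_filt:
  assumes "x0 \<in> borel_measurable M" "\<And>j i. \<xi> j i \<in> M \<rightarrow>\<^sub>M S"
  shows "sigma_finite_subalgebra M (gen_filt M x0 S \<xi> k)"
  by (intro finite_measure_subalgebra_is_sigma_finite finite_measure_subalgebra.intro
      finite_measure_subalgebra_axioms.intro finite_measure_axioms subalgebra_gen_filt[OF assms])

lemma (in sigma_finite_subalgebra) real_cond_exp_le_drop_centered:
  fixes g h :: "'j::finite \<Rightarrow> 'a \<Rightarrow> real"
  assumes le: "AE \<omega> in M. Y \<omega> \<le> A \<omega> - (\<Sum>j\<in>UNIV. g j \<omega> * h j \<omega>) + B \<omega>"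
    and [measurable]: "integrable M Y" "integrable M A" "A \<in> borel_measurable F" "integrable M B"
    and [measurable]: "\<And>j. g j \<in> borel_measurable F" "\<And>j. h j \<in> borel_measurable M"
    and gh_int: "\<And>j. integrable M (\<lambda>\<omega>. g j \<omega> * h j \<omega>)"
    and centered: "\<And>j. AE \<omega> in M. real_cond_exp M F (h j) \<omega> = 0"
  shows "AE \<omega> in M. real_cond_exp M F Y \<omega> \<le> A \<omega> + real_cond_exp M F B \<omega>"
proof -
  let ?C = "\<lambda>\<omega>. \<Sum>j\<in>UNIV. g j \<omega> * h j \<omega>"
  have C_int: "integrable M ?C"
    using gh_int by auto
  have "AE \<omega> in M. real_cond_exp M F Y \<omega> \<le> real_cond_exp M F (\<lambda>\<omega>. (A \<omega> - ?C \<omega>) + B \<omega>) \<omega>"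
    using C_int assms(2-5) by (intro real_cond_exp_mono le) auto
  moreover have "AE \<omega> in M. real_cond_exp M F (\<lambda>\<omega>. (A \<omega> - ?C \<omega>) + B \<omega>) \<omega>
      = real_cond_exp M F (\<lambda>\<omega>. A \<omega> - ?C \<omega>) \<omega> + real_cond_exp M F B \<omega>"
    using C_int assms(2-5) by (intro real_cond_exp_add) auto
  moreover have "AE \<omega> in M. real_cond_exp M F (\<lambda>\<omega>. A \<omega> - ?C \<omega>) \<omega>
      = real_cond_exp M F A \<omega> - real_cond_exp M F ?C \<omega>"
    using C_int assms(2-5) by (intro real_cond_exp_diff) auto
  moreover have "AE \<omega> in M. real_cond_exp M F A \<omega> = A \<omega>"
    using assms(3,4) by (rule real_cond_exp_F_meas)
  moreover have "AE \<omega> in M. real_cond_exp M F ?C \<omega> = (\<Sum>j\<in>UNIV. real_cond_exp M F (\<lambda>\<omega>. g j \<omega> * h j \<omega>) \<omega>)"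
    using gh_int by (rule real_cond_exp_sum)
  moreover have "AE \<omega> in M. \<forall>j. real_cond_exp M F (\<lambda>\<omega>. g j \<omega> * h j \<omega>) \<omega> = g j \<omega> * real_cond_exp M F (h j) \<omega>"
    unfolding AE_all_countable by (intro allI real_cond_exp_mult gh_int) auto
  moreover have "AE \<omega> in M. \<forall>j. real_cond_exp M F (h j) \<omega> = 0"
    unfolding AE_all_countable using centered by blast
  ultimately show ?thesis
    by eventually_elim simp
qed

lemma (in prob_space) integral_le_of_real_cond_exp_le:
  assumes "sigma_finite_subalgebra M F" "integrable M Y" "integrable M Z"
    and "AE \<omega> in M. real_cond_exp M F Y \<omega> \<le> c * Z \<omega> + e"
  shows "(\<integral>\<omega>. Y \<omega> \<partial>M) \<le> c * (\<integral>\<omega>. Z \<omega> \<partial>M) + e"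
proof -
  have "(\<integral>\<omega>. Y \<omega> \<partial>M) = (\<integral>\<omega>. real_cond_exp M F Y \<omega> \<partial>M)"
    using sigma_finite_subalgebra.real_cond_exp_int(2)[OF assms(1,2)] by simp
  also have "\<dots> \<le> (\<integral>\<omega>. c * Z \<omega> + e \<partial>M)"
    using sigma_finite_subalgebra.real_cond_exp_int(1)[OF assms(1,2)] assms(3,4)
    by (intro integral_mono_AE) auto
  also have "\<dots> = c * (\<integral>\<omega>. Z \<omega> \<partial>M) + e"
    using assms(3) by (simp add: prob_space)
  finally show ?thesis .
qed

lemma step_factor_le_of_relative_spread:
  fixes L \<eta> \<beta> \<delta> \<Gamma> :: real
  assumes "0 < L" "0 < \<delta>" "0 \<le> \<Gamma>" "(\<Gamma> - \<delta>) / \<delta> \<le> \<beta>"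
  shows "1 - 2 * (\<eta> + L) * \<delta> + 2 * L * \<Gamma> + L\<^sup>2 * \<Gamma>\<^sup>2 \<le> 1 - 2 * (\<eta> - \<beta> * L) * \<delta> + (1 + \<beta>)\<^sup>2 * L\<^sup>2 * \<delta>\<^sup>2"
    and "\<Gamma>\<^sup>2 \<le> (1 + \<beta>)\<^sup>2 * \<delta>\<^sup>2"
proof -
  have \<Gamma>_le: "\<Gamma> \<le> (1 + \<beta>) * \<delta>"
    using assms(2,4) by (simp add: pos_divide_le_eq algebra_simps)
  have \<Gamma>_sq: "\<Gamma>\<^sup>2 \<le> ((1 + \<beta>) * \<delta>)\<^sup>2"
    using \<Gamma>_le assms(3) by (rule power_mono)
  then show "\<Gamma>\<^sup>2 \<le> (1 + \<beta>)\<^sup>2 * \<delta>\<^sup>2"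
    by (simp add: power_mult_distrib)
  have "2 * L * \<Gamma> + L\<^sup>2 * \<Gamma>\<^sup>2 \<le> 2 * L * ((1 + \<beta>) * \<delta>) + L\<^sup>2 * ((1 + \<beta>) * \<delta>)\<^sup>2"
    using assms(1) \<Gamma>_le \<Gamma>_sq by (intro add_mono mult_left_mono) auto
  also have "\<dots> = 2 * \<beta> * L * \<delta> + 2 * L * \<delta> + (1 + \<beta>)\<^sup>2 * L\<^sup>2 * \<delta>\<^sup>2"
    by (simp add: power2_eq_square algebra_simps)
  finally show "1 - 2 * (\<eta> + L) * \<delta> + 2 * L * \<Gamma> + L\<^sup>2 * \<Gamma>\<^sup>2 \<le> 1 - 2 * (\<eta> - \<beta> * L) * \<delta> + (1 + \<beta>)\<^sup>2 * L\<^sup>2 * \<delta>\<^sup>2"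
    by (simp add: algebra_simps)
qed

locale cartesian_SA = prob_space M
  for M :: "'a measure" +
  fixes S :: "'s measure"
    and blk :: "'c::finite \<Rightarrow> 'i::finite"
    and Xb :: "'i \<Rightarrow> (real^'c) set"
    and F :: "real^'c \<Rightarrow> real^'c"
    and \<Phi> :: "'i \<Rightarrow> real^'c \<Rightarrow> 's \<Rightarrow> real^'c"
    and \<xi> :: "nat \<Rightarrow> 'i \<Rightarrow> 'a \<Rightarrow> 's"
    and x :: "nat \<Rightarrow> 'a \<Rightarrow> real^'c"
    and w :: "nat \<Rightarrow> 'i \<Rightarrow> 'a \<Rightarrow> real^'c"
    and \<gamma> :: "nat \<Rightarrow> 'i \<Rightarrow> real"
    and \<delta> \<Gamma> :: "nat \<Rightarrow> real"
    and L \<eta> \<nu> :: real and xs :: "real^'c"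
  assumes Xb_sub: "\<And>i. Xb i \<subseteq> block_space blk i"
    and Xb_ne: "\<And>i. Xb i \<noteq> {}" and Xb_closed: "\<And>i. closed (Xb i)"
    and Xb_convex: "\<And>i. convex (Xb i)"
    and \<Phi>_meas: "\<And>i. (\<lambda>p. \<Phi> i (fst p) (snd p)) \<in> borel_measurable (borel \<Otimes>\<^sub>M S)"
    and L_pos: "L > 0"
    and F_lip: "\<And>y z. y \<in> cart_prod blk Xb \<Longrightarrow> z \<in> cart_prod blk Xb \<Longrightarrow> norm (F y - F z) \<le> L * norm (y - z)"
    and F_smon: "\<And>y z. y \<in> cart_prod blk Xb \<Longrightarrow> z \<in> cart_prod blk Xb \<Longrightarrow>
                   (F y - F z) \<bullet> (y - z) \<ge> \<eta> * (norm (y - z))\<^sup>2"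
    and xs_sol: "VI_sol (cart_prod blk Xb) F xs"
    and \<xi>_meas: "\<And>k i. \<xi> k i \<in> M \<rightarrow>\<^sub>M S"
    and x0_meas: "x 0 \<in> borel_measurable M"
    and x0_in: "\<And>\<omega>. \<omega> \<in> space M \<Longrightarrow> x 0 \<omega> \<in> cart_prod blk Xb"
    and x0_sq: "integrable M (\<lambda>\<omega>. (norm (x 0 \<omega>))\<^sup>2)"
    and w_def: "\<And>k i \<omega>. w k i \<omega> = blockproj blk i (\<Phi> i (x k \<omega>) (\<xi> k i \<omega>)) - blockproj blk i (F (x k \<omega>))"
    and x_rec: "\<And>k i \<omega>. \<omega> \<in> space M \<Longrightarrow> blockproj blk i (x (Suc k) \<omega>) =
                  closest_point (Xb i) (blockproj blk i (x k \<omega>) - \<gamma> k i *\<^sub>R (blockproj blk i (F (x k \<omega>)) + w k i \<omega>))"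
    and w_int: "\<And>k i c. integrable M (\<lambda>\<omega>. w k i \<omega> $ c)"
    and w_mean0: "\<And>k i c. AE \<omega> in M. real_cond_exp M (gen_filt M (x 0) S \<xi> k) (\<lambda>\<omega>. w k i \<omega> $ c) \<omega> = 0"
    and w_sq_int: "\<And>k. integrable M (\<lambda>\<omega>. (norm (\<Sum>i\<in>UNIV. w k i \<omega>))\<^sup>2)"
    and w_var: "\<And>k. AE \<omega> in M. real_cond_exp M (gen_filt M (x 0) S \<xi> k) (\<lambda>\<omega>. (norm (\<Sum>i\<in>UNIV. w k i \<omega>))\<^sup>2) \<omega> \<le> \<nu>\<^sup>2"
    and \<delta>_pos: "\<And>k. \<delta> k > 0"
    and \<delta>_le: "\<And>k i. \<delta> k \<le> \<gamma> k i" and \<Gamma>_ge: "\<And>k i. \<gamma> k i \<le> \<Gamma> k"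
begin

abbreviation filt :: "nat \<Rightarrow> 'a measure" where
  "filt \<equiv> gen_filt M (x 0) S \<xi>"

lemma sigma_finite_subalgebra_filt: "sigma_finite_subalgebra M (filt k)"
  using x0_meas \<xi>_meas by (rule sigma_finite_subalgebra_gen_filt)

lemma \<gamma>_nonneg: "0 \<le> \<gamma> k i"
  using \<delta>_pos[of k] \<delta>_le[of k i] by linarith

lemma \<Gamma>_nonneg: "0 \<le> \<Gamma> k"
  using \<gamma>_nonneg[of k undefined] \<Gamma>_ge[of k undefined] by linarith

lemma xs_in: "xs \<in> cart_prod blk Xb"
  using xs_sol by (simp add: VI_sol_def)

lemma continuous_on_F: "continuous_on (cart_prod blk Xb) F"
  by (rule lipschitz_on_continuous_on[of L], rule lipschitz_onI)
     (use F_lip L_pos in \<open>auto simp: dist_norm\<close>)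

lemma blockproj_iterate_Suc:
  assumes "\<omega> \<in> space M"
  shows "blockproj blk i (x (Suc k) \<omega>) = closest_point (Xb i)
           (blockproj blk i (x k \<omega>) - \<gamma> k i *\<^sub>R blockproj blk i (\<Phi> i (x k \<omega>) (\<xi> k i \<omega>)))"
  using x_rec[OF assms] by (simp add: w_def)

lemma iterate_in_cart_prod:
  assumes "\<omega> \<in> space M"
  shows "x k \<omega> \<in> cart_prod blk Xb"
proof (cases k)
  case 0
  then show ?thesis
    using x0_in[OF assms] by simp
next
  case (Suc k')
  then show ?thesis
    using closest_point_in_set[OF Xb_closed Xb_ne]
    by (simp add: cart_prod_def blockproj_iterate_Suc[OF assms])
qed

lemma iterate_measurable: "x k \<in> borel_measurable (filt k)"
proof (induction k)
  case 0
  show ?case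
    by (rule measurable_gen_filt_initial)
next
  case (Suc k)
  have xk: "x k \<in> borel_measurable (filt (Suc k))"
    using Suc measurable_from_subalg[OF subalgebra_gen_filt_Suc] by blast
  have step_meas: "(\<lambda>\<omega>. closest_point (Xb i)
      (blockproj blk i (x k \<omega>) - \<gamma> k i *\<^sub>R blockproj blk i (\<Phi> i (x k \<omega>) (\<xi> k i \<omega>))))
      \<in> borel_measurable (filt (Suc k))" for i
  proof -
    have "\<xi> k i \<in> filt (Suc k) \<rightarrow>\<^sub>M S"
      by (rule measurable_gen_filt_sample[OF \<xi>_meas]) simp
    then have "(\<lambda>\<omega>. (x k \<omega>, \<xi> k i \<omega>)) \<in> filt (Suc k) \<rightarrow>\<^sub>M borel \<Otimes>\<^sub>M S"
      using xk by (intro measurable_Pair) auto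
    from measurable_compose[OF this \<Phi>_meas[of i]]
    have "(\<lambda>\<omega>. \<Phi> i (x k \<omega>) (\<xi> k i \<omega>)) \<in> borel_measurable (filt (Suc k))"
      by simp
    then have "(\<lambda>\<omega>. blockproj blk i (x k \<omega>) - \<gamma> k i *\<^sub>R blockproj blk i (\<Phi> i (x k \<omega>) (\<xi> k i \<omega>)))
        \<in> borel_measurable (filt (Suc k))"
      using xk by (intro borel_measurable_diff borel_measurable_scaleR borel_measurable_const
          borel_measurable_continuous_on[OF continuous_on_blockproj[OF continuous_on_id]])
    then show ?thesis
      by (rule borel_measurable_continuous_on[OF continuous_on_closest_point[OF Xb_convex Xb_closed Xb_ne]])
  qed
  have "x (Suc k) \<omega> = (\<Sum>i\<in>UNIV. closest_point (Xb i)
      (blockproj blk i (x k \<omega>) - \<gamma> k i *\<^sub>R blockproj blk i (\<Phi> i (x k \<omega>) (\<xi> k i \<omega>))))"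
    if "\<omega> \<in> space (filt (Suc k))" for \<omega>
    using that sum_blockproj[of blk "x (Suc k) \<omega>"] by (simp add: blockproj_iterate_Suc)
  then show ?case
    using step_meas by (subst measurable_cong) (auto intro: borel_measurable_sum)
qed

definition drift :: "nat \<Rightarrow> 'i \<Rightarrow> 'a \<Rightarrow> real^'c" where
  "drift k i \<omega> = blockproj blk i (x k \<omega> - xs) - \<gamma> k i *\<^sub>R blockproj blk i (F (x k \<omega>) - F xs)"

text \<open>The cross term \<open>2 \<gamma>\<^sub>k\<^sub>,\<^sub>i (a\<^sub>k\<^sub>,\<^sub>i \<bullet> w\<^sub>k\<^sub>,\<^sub>i)\<close> of the expanded square is split over
  (block, coordinate) pairs: each summand is then an \<open>F\<^sub>k\<close>-measurable coefficient times a noise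
  coordinate, whose conditional mean vanishes.\<close>

definition cross_coeff :: "nat \<Rightarrow> 'i \<times> 'c \<Rightarrow> 'a \<Rightarrow> real" where
  "cross_coeff k = (\<lambda>(i, c) \<omega>. 2 * \<gamma> k i * (drift k i \<omega> $ c))"

definition noise_coord :: "nat \<Rightarrow> 'i \<times> 'c \<Rightarrow> 'a \<Rightarrow> real" where
  "noise_coord k = (\<lambda>(i, c) \<omega>. w k i \<omega> $ c)"

lemma noise_in_block_space: "w k i \<omega> \<in> block_space blk i"
  by (simp add: w_def block_space_def)

lemma blockproj_sum_noise: "blockproj blk i (\<Sum>j\<in>UNIV. w k j \<omega>) = w k i \<omega>"
  using noise_in_block_space by (rule blockproj_sum_block_space)

lemma sum_cross_terms:
  "(\<Sum>j\<in>UNIV. cross_coeff k j \<omega> * noise_coord k j \<omega>) = (\<Sum>i\<in>UNIV. 2 * \<gamma> k i * (drift k i \<omega> \<bullet> w k i \<omega>))"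
proof -
  have "(\<Sum>j\<in>UNIV. cross_coeff k j \<omega> * noise_coord k j \<omega>)
      = (\<Sum>i\<in>UNIV. \<Sum>c\<in>UNIV. cross_coeff k (i, c) \<omega> * noise_coord k (i, c) \<omega>)"
    by (simp add: sum.cartesian_product flip: UNIV_Times_UNIV)
  then show ?thesis
    by (simp add: cross_coeff_def noise_coord_def inner_vec_def sum_distrib_left mult.assoc)
qed

lemma iterate_sq_dist_le_sum_blocks:
  assumes "\<omega> \<in> space M"
  shows "(norm (x (Suc k) \<omega> - xs))\<^sup>2 \<le> (\<Sum>i\<in>UNIV. (norm (drift k i \<omega> - \<gamma> k i *\<^sub>R w k i \<omega>))\<^sup>2)"
proof -
  have "norm (blockproj blk i (x (Suc k) \<omega> - xs)) \<le> norm (drift k i \<omega> - \<gamma> k i *\<^sub>R w k i \<omega>)" for i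
  proof -
    let ?u = "blockproj blk i (x k \<omega>) - \<gamma> k i *\<^sub>R (blockproj blk i (F (x k \<omega>)) + w k i \<omega>)"
    let ?v = "blockproj blk i xs - \<gamma> k i *\<^sub>R blockproj blk i (F xs)"
    have "blockproj blk i (x (Suc k) \<omega> - xs) = closest_point (Xb i) ?u - closest_point (Xb i) ?v"
      using VI_sol_cart_prod_fixed_point[OF Xb_sub Xb_closed Xb_convex xs_sol \<gamma>_nonneg]
      by (simp add: blockproj_diff x_rec[OF assms])
    also have "norm \<dots> \<le> norm (?u - ?v)"
      using closest_point_lipschitz[OF Xb_convex Xb_closed Xb_ne] by (simp add: dist_norm)
    also have "?u - ?v = drift k i \<omega> - \<gamma> k i *\<^sub>R w k i \<omega>"
      by (simp add: drift_def blockproj_diff algebra_simps)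
    finally show ?thesis .
  qed
  then have "(\<Sum>i\<in>UNIV. (norm (blockproj blk i (x (Suc k) \<omega> - xs)))\<^sup>2)
      \<le> (\<Sum>i\<in>UNIV. (norm (drift k i \<omega> - \<gamma> k i *\<^sub>R w k i \<omega>))\<^sup>2)"
    by (intro sum_mono power_mono) auto
  then show ?thesis
    by (simp add: sum_norm_blockproj)
qed

lemma one_step_bound:
  assumes "\<omega> \<in> space M"
  shows "(norm (x (Suc k) \<omega> - xs))\<^sup>2
    \<le> (1 - 2 * (\<eta> + L) * \<delta> k + 2 * L * \<Gamma> k + L\<^sup>2 * (\<Gamma> k)\<^sup>2) * (norm (x k \<omega> - xs))\<^sup>2
       - (\<Sum>j\<in>UNIV. cross_coeff k j \<omega> * noise_coord k j \<omega>) + (\<Gamma> k)\<^sup>2 * (norm (\<Sum>i\<in>UNIV. w k i \<omega>))\<^sup>2"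
proof -
  have xk: "x k \<omega> \<in> cart_prod blk Xb"
    using assms by (rule iterate_in_cart_prod)
  have expand: "(norm (drift k i \<omega> - \<gamma> k i *\<^sub>R w k i \<omega>))\<^sup>2
      = (norm (drift k i \<omega>))\<^sup>2 - 2 * \<gamma> k i * (drift k i \<omega> \<bullet> w k i \<omega>) + (\<gamma> k i)\<^sup>2 * (norm (w k i \<omega>))\<^sup>2" for i
    unfolding power2_norm_eq_inner by (simp add: inner_diff_left inner_diff_right inner_commute power2_eq_square)
  have drift_bound: "(\<Sum>i\<in>UNIV. (norm (drift k i \<omega>))\<^sup>2)
      \<le> (1 - 2 * (\<eta> + L) * \<delta> k + 2 * L * \<Gamma> k + L\<^sup>2 * (\<Gamma> k)\<^sup>2) * (norm (x k \<omega> - xs))\<^sup>2"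
    unfolding drift_def
    using L_pos F_lip[OF xk xs_in] F_smon[OF xk xs_in] less_imp_le[OF \<delta>_pos] \<delta>_le \<Gamma>_ge
    by (intro blockwise_step_contraction) (auto simp: inner_commute)
  have noise_bound: "(\<Sum>i\<in>UNIV. (\<gamma> k i)\<^sup>2 * (norm (w k i \<omega>))\<^sup>2) \<le> (\<Gamma> k)\<^sup>2 * (norm (\<Sum>i\<in>UNIV. w k i \<omega>))\<^sup>2"
    using sum_weighted_norm_blockproj_le[OF \<gamma>_nonneg \<Gamma>_ge, where blk=blk and v="\<Sum>i\<in>UNIV. w k i \<omega>"]
    by (simp add: blockproj_sum_noise)
  have "(norm (x (Suc k) \<omega> - xs))\<^sup>2 \<le> (\<Sum>i\<in>UNIV. (norm (drift k i \<omega> - \<gamma> k i *\<^sub>R w k i \<omega>))\<^sup>2)"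
    using assms by (rule iterate_sq_dist_le_sum_blocks)
  also have "\<dots> = (\<Sum>i\<in>UNIV. (norm (drift k i \<omega>))\<^sup>2) - (\<Sum>j\<in>UNIV. cross_coeff k j \<omega> * noise_coord k j \<omega>)
      + (\<Sum>i\<in>UNIV. (\<gamma> k i)\<^sup>2 * (norm (w k i \<omega>))\<^sup>2)"
    by (simp add: expand sum_cross_terms sum.distrib sum_subtractf)
  finally show ?thesis
    using drift_bound noise_bound by linarith
qed

lemma cross_coeff_measurable: "cross_coeff k j \<in> borel_measurable (filt k)"
proof -
  obtain i c where j: "j = (i, c)"
    by fastforce
  have "cross_coeff k j = (\<lambda>\<omega>. (\<lambda>y. 2 * \<gamma> k i * ((blockproj blk i (y - xs)
      - \<gamma> k i *\<^sub>R blockproj blk i (F y - F xs)) $ c)) (x k \<omega>))"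
    by (simp add: j cross_coeff_def drift_def)
  also have "\<dots> \<in> borel_measurable (filt k)"
  proof (rule borel_measurable_continuous_on_into[OF _ iterate_measurable])
    show "continuous_on (cart_prod blk Xb) (\<lambda>y. 2 * \<gamma> k i * ((blockproj blk i (y - xs)
      - \<gamma> k i *\<^sub>R blockproj blk i (F y - F xs)) $ c))"
      by (intro continuous_intros continuous_on_F)
  qed (simp add: iterate_in_cart_prod)
  finally show ?thesis .
qed

lemma noise_coord_integrable: "integrable M (noise_coord k j)"
  using w_int by (cases j) (simp add: noise_coord_def)

lemma abs_cross_coeff_le:
  assumes "\<omega> \<in> space M"
  shows "\<bar>cross_coeff k j \<omega>\<bar> \<le> 2 * \<Gamma> k * (1 + \<Gamma> k * L) * norm (x k \<omega> - xs)"
proof -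
  obtain i c where j: "j = (i, c)"
    by fastforce
  have "norm (blockproj blk i (F (x k \<omega>) - F xs)) \<le> L * norm (x k \<omega> - xs)"
    using norm_blockproj_le F_lip[OF iterate_in_cart_prod[OF assms] xs_in] by (rule order_trans)
  then have "\<gamma> k i * norm (blockproj blk i (F (x k \<omega>) - F xs)) \<le> \<Gamma> k * (L * norm (x k \<omega> - xs))"
    by (rule mult_mono[OF \<Gamma>_ge _ \<Gamma>_nonneg norm_ge_zero])
  then have "norm (\<gamma> k i *\<^sub>R blockproj blk i (F (x k \<omega>) - F xs)) \<le> \<Gamma> k * (L * norm (x k \<omega> - xs))"
    using \<gamma>_nonneg by simp
  moreover have "norm (drift k i \<omega>)
      \<le> norm (blockproj blk i (x k \<omega> - xs)) + norm (\<gamma> k i *\<^sub>R blockproj blk i (F (x k \<omega>) - F xs))"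
    unfolding drift_def by (rule norm_triangle_ineq4)
  ultimately have "norm (drift k i \<omega>) \<le> (1 + \<Gamma> k * L) * norm (x k \<omega> - xs)"
    using norm_blockproj_le[of blk i "x k \<omega> - xs"] by (simp add: algebra_simps)
  then have "\<bar>drift k i \<omega> $ c\<bar> \<le> (1 + \<Gamma> k * L) * norm (x k \<omega> - xs)"
    by (rule order_trans[OF component_le_norm_cart])
  then have "2 * \<gamma> k i * \<bar>drift k i \<omega> $ c\<bar> \<le> 2 * \<Gamma> k * ((1 + \<Gamma> k * L) * norm (x k \<omega> - xs))"
    using \<gamma>_nonneg \<Gamma>_ge \<Gamma>_nonneg by (intro mult_mono) auto
  then show ?thesis
    using \<gamma>_nonneg by (simp add: j cross_coeff_def abs_mult mult.assoc)
qed

lemma abs_noise_coord_le: "\<bar>noise_coord k j \<omega>\<bar> \<le> norm (\<Sum>i\<in>UNIV. w k i \<omega>)"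
proof -
  obtain i c where j: "j = (i, c)"
    by fastforce
  have "\<bar>blockproj blk i (\<Sum>i\<in>UNIV. w k i \<omega>) $ c\<bar> \<le> \<bar>(\<Sum>i\<in>UNIV. w k i \<omega>) $ c\<bar>"
    by simp
  also have "\<dots> \<le> norm (\<Sum>i\<in>UNIV. w k i \<omega>)"
    by (rule component_le_norm_cart)
  finally show ?thesis
    by (simp add: j noise_coord_def blockproj_sum_noise)
qed

lemma cross_term_integrable:
  assumes "integrable M (\<lambda>\<omega>. (norm (x k \<omega> - xs))\<^sup>2)"
  shows "integrable M (\<lambda>\<omega>. cross_coeff k j \<omega> * noise_coord k j \<omega>)"
proof (rule Bochner_Integration.integrable_bound)
  define K where "K = 2 * \<Gamma> k * (1 + \<Gamma> k * L)"
  have K: "0 \<le> K"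
    using \<Gamma>_nonneg L_pos by (simp add: K_def)
  show "integrable M (\<lambda>\<omega>. K * ((norm (x k \<omega> - xs))\<^sup>2 + (norm (\<Sum>i\<in>UNIV. w k i \<omega>))\<^sup>2))"
    using assms w_sq_int by simp
  show "(\<lambda>\<omega>. cross_coeff k j \<omega> * noise_coord k j \<omega>) \<in> borel_measurable M"
    using measurable_from_subalg[OF subalgebra_gen_filt[OF x0_meas \<xi>_meas] cross_coeff_measurable]
      borel_measurable_integrable[OF noise_coord_integrable] by measurable
  show "AE \<omega> in M. norm (cross_coeff k j \<omega> * noise_coord k j \<omega>)
      \<le> norm (K * ((norm (x k \<omega> - xs))\<^sup>2 + (norm (\<Sum>i\<in>UNIV. w k i \<omega>))\<^sup>2))"
  proof (rule AE_I2)
    fix \<omega> assume \<omega>: "\<omega> \<in> space M"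
    let ?a = "norm (x k \<omega> - xs)" and ?b = "norm (\<Sum>i\<in>UNIV. w k i \<omega>)"
    have "\<bar>cross_coeff k j \<omega> * noise_coord k j \<omega>\<bar> \<le> (K * ?a) * ?b"
      unfolding abs_mult K_def using abs_cross_coeff_le[OF \<omega>] abs_noise_coord_le K
      by (intro mult_mono) (auto simp: K_def)
    also have "\<dots> \<le> K * (?a\<^sup>2 + ?b\<^sup>2)"
    proof -
      have "2 * (?a * ?b) \<le> ?a\<^sup>2 + ?b\<^sup>2"
        using sum_squares_ge_zero[of "?a - ?b" 0] by (simp add: power2_eq_square algebra_simps)
      moreover have "0 \<le> ?a * ?b"
        by simp
      ultimately have "?a * ?b \<le> ?a\<^sup>2 + ?b\<^sup>2"
        by linarith
      then show ?thesis
        using K by (simp add: mult.assoc mult_left_mono)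
    qed
    finally show "norm (cross_coeff k j \<omega> * noise_coord k j \<omega>) \<le> norm (K * (?a\<^sup>2 + ?b\<^sup>2))"
      using K by simp
  qed
qed

lemma sq_dist_measurable: "(\<lambda>\<omega>. (norm (x k \<omega> - xs))\<^sup>2) \<in> borel_measurable (filt k)"
  using iterate_measurable by measurable

lemma sq_dist_integrable: "integrable M (\<lambda>\<omega>. (norm (x k \<omega> - xs))\<^sup>2)"
proof (induction k)
  case 0
  show ?case
  proof (rule Bochner_Integration.integrable_bound)
    show "integrable M (\<lambda>\<omega>. 2 * (norm (x 0 \<omega>))\<^sup>2 + 2 * (norm xs)\<^sup>2)"
      using x0_sq by simp
    show "(\<lambda>\<omega>. (norm (x 0 \<omega> - xs))\<^sup>2) \<in> borel_measurable M"
      using x0_meas by measurable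
    have "(norm (x 0 \<omega> - xs))\<^sup>2 \<le> 2 * (norm (x 0 \<omega>))\<^sup>2 + 2 * (norm xs)\<^sup>2" for \<omega>
      by (rule power2_norm_diff_le)
    then show "AE \<omega> in M. norm ((norm (x 0 \<omega> - xs))\<^sup>2) \<le> norm (2 * (norm (x 0 \<omega>))\<^sup>2 + 2 * (norm xs)\<^sup>2)"
      by (intro AE_I2) simp
  qed
next
  case (Suc k)
  let ?q = "1 - 2 * (\<eta> + L) * \<delta> k + 2 * L * \<Gamma> k + L\<^sup>2 * (\<Gamma> k)\<^sup>2"
  let ?R = "\<lambda>\<omega>. ?q * (norm (x k \<omega> - xs))\<^sup>2 - (\<Sum>j\<in>UNIV. cross_coeff k j \<omega> * noise_coord k j \<omega>)
      + (\<Gamma> k)\<^sup>2 * (norm (\<Sum>i\<in>UNIV. w k i \<omega>))\<^sup>2"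
  show ?case
  proof (rule Bochner_Integration.integrable_bound)
    show "integrable M ?R"
      using Suc.IH cross_term_integrable[OF Suc.IH] w_sq_int by auto
    show "(\<lambda>\<omega>. (norm (x (Suc k) \<omega> - xs))\<^sup>2) \<in> borel_measurable M"
      using measurable_from_subalg[OF subalgebra_gen_filt[OF x0_meas \<xi>_meas] sq_dist_measurable] .
    show "AE \<omega> in M. norm ((norm (x (Suc k) \<omega> - xs))\<^sup>2) \<le> norm (?R \<omega>)"
    proof (rule AE_I2)
      fix \<omega> assume "\<omega> \<in> space M"
      then have "(norm (x (Suc k) \<omega> - xs))\<^sup>2 \<le> ?R \<omega>"
        by (rule one_step_bound)
      then show "norm ((norm (x (Suc k) \<omega> - xs))\<^sup>2) \<le> norm (?R \<omega>)"
        by simp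
    qed
  qed
qed

lemma conditional_bound:
  "AE \<omega> in M. real_cond_exp M (filt k) (\<lambda>\<omega>. (norm (x (Suc k) \<omega> - xs))\<^sup>2) \<omega>
     \<le> (1 - 2 * (\<eta> + L) * \<delta> k + 2 * L * \<Gamma> k + L\<^sup>2 * (\<Gamma> k)\<^sup>2) * (norm (x k \<omega> - xs))\<^sup>2 + (\<Gamma> k)\<^sup>2 * \<nu>\<^sup>2"
proof -
  interpret sigma_finite_subalgebra M "filt k"
    by (rule sigma_finite_subalgebra_filt)
  let ?W = "\<lambda>\<omega>. (norm (\<Sum>i\<in>UNIV. w k i \<omega>))\<^sup>2"
  have centered: "AE \<omega> in M. real_cond_exp M (filt k) (noise_coord k j) \<omega> = 0" for j
    using w_mean0 by (cases j) (simp add: noise_coord_def)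
  have "AE \<omega> in M. real_cond_exp M (filt k) (\<lambda>\<omega>. (norm (x (Suc k) \<omega> - xs))\<^sup>2) \<omega>
     \<le> (1 - 2 * (\<eta> + L) * \<delta> k + 2 * L * \<Gamma> k + L\<^sup>2 * (\<Gamma> k)\<^sup>2) * (norm (x k \<omega> - xs))\<^sup>2
       + real_cond_exp M (filt k) (\<lambda>\<omega>. (\<Gamma> k)\<^sup>2 * ?W \<omega>) \<omega>"
  proof (rule real_cond_exp_le_drop_centered[OF _ sq_dist_integrable _ _ _ cross_coeff_measurable
        borel_measurable_integrable[OF noise_coord_integrable]
        cross_term_integrable[OF sq_dist_integrable] centered])
    show "AE \<omega> in M. (norm (x (Suc k) \<omega> - xs))\<^sup>2
      \<le> (1 - 2 * (\<eta> + L) * \<delta> k + 2 * L * \<Gamma> k + L\<^sup>2 * (\<Gamma> k)\<^sup>2) * (norm (x k \<omega> - xs))\<^sup>2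
        - (\<Sum>j\<in>UNIV. cross_coeff k j \<omega> * noise_coord k j \<omega>) + (\<Gamma> k)\<^sup>2 * ?W \<omega>"
      using one_step_bound by (rule AE_I2)
  qed (use sq_dist_integrable sq_dist_measurable w_sq_int in simp_all)
  moreover have "AE \<omega> in M. real_cond_exp M (filt k) (\<lambda>\<omega>. (\<Gamma> k)\<^sup>2 * ?W \<omega>) \<omega> = (\<Gamma> k)\<^sup>2 * real_cond_exp M (filt k) ?W \<omega>"
    using w_sq_int by (rule real_cond_exp_cmult)
  ultimately show ?thesis
    using w_var[of k]
  proof eventually_elim
    case (elim \<omega>)
    have "(\<Gamma> k)\<^sup>2 * real_cond_exp M (filt k) ?W \<omega> \<le> (\<Gamma> k)\<^sup>2 * \<nu>\<^sup>2"
      using elim(3) by (rule mult_left_mono) simp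
    then show ?case
      using elim(1,2) by linarith
  qed
qed

lemma expected_bound:
  assumes "(\<Gamma> k - \<delta> k) / \<delta> k \<le> \<beta>"
  shows "(\<integral>\<omega>. (norm (x (Suc k) \<omega> - xs))\<^sup>2 \<partial>M)
           \<le> (1 - 2 * (\<eta> - \<beta> * L) * \<delta> k + (1 + \<beta>)\<^sup>2 * L\<^sup>2 * (\<delta> k)\<^sup>2) * (\<integral>\<omega>. (norm (x k \<omega> - xs))\<^sup>2 \<partial>M)
             + (1 + \<beta>)\<^sup>2 * (\<delta> k)\<^sup>2 * \<nu>\<^sup>2"
proof -
  note factor = step_factor_le_of_relative_spread[OF L_pos \<delta>_pos \<Gamma>_nonneg assms]
  have "(\<integral>\<omega>. (norm (x (Suc k) \<omega> - xs))\<^sup>2 \<partial>M)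
      \<le> (1 - 2 * (\<eta> + L) * \<delta> k + 2 * L * \<Gamma> k + L\<^sup>2 * (\<Gamma> k)\<^sup>2) * (\<integral>\<omega>. (norm (x k \<omega> - xs))\<^sup>2 \<partial>M)
        + (\<Gamma> k)\<^sup>2 * \<nu>\<^sup>2"
    by (rule integral_le_of_real_cond_exp_le[OF sigma_finite_subalgebra_filt sq_dist_integrable
          sq_dist_integrable conditional_bound])
  also have "\<dots> \<le> (1 - 2 * (\<eta> - \<beta> * L) * \<delta> k + (1 + \<beta>)\<^sup>2 * L\<^sup>2 * (\<delta> k)\<^sup>2) * (\<integral>\<omega>. (norm (x k \<omega> - xs))\<^sup>2 \<partial>M)
        + (1 + \<beta>)\<^sup>2 * (\<delta> k)\<^sup>2 * \<nu>\<^sup>2"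
    by (intro add_mono mult_right_mono factor integral_nonneg_AE) auto
  finally show ?thesis .
qed

end

theorem lemma3:
  fixes M :: "'a measure" and S :: "'s measure"
    and blk :: "'c::finite \<Rightarrow> 'i::finite"
    and Xb :: "'i \<Rightarrow> (real^'c) set"
    and F :: "real^'c \<Rightarrow> real^'c"
    and \<Phi> :: "'i \<Rightarrow> real^'c \<Rightarrow> 's \<Rightarrow> real^'c"
    and \<zeta> :: "'i \<Rightarrow> 'a \<Rightarrow> 's"
    and \<xi> :: "nat \<Rightarrow> 'i \<Rightarrow> 'a \<Rightarrow> 's"
    and x :: "nat \<Rightarrow> 'a \<Rightarrow> real^'c"
    and w :: "nat \<Rightarrow> 'i \<Rightarrow> 'a \<Rightarrow> real^'c"
    and \<gamma> :: "nat \<Rightarrow> 'i \<Rightarrow> real"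
    and \<delta> \<Gamma> :: "nat \<Rightarrow> real"
    and L \<eta> \<nu> :: real and xs :: "real^'c"
  defines "X \<equiv> cart_prod blk Xb"
      and "Fk \<equiv> gen_filt M (x 0) S \<xi>"
  assumes M: "prob_space M"
    and blk_surj: "surj blk"
    and Xb_sub: "\<And>i. Xb i \<subseteq> block_space blk i"
    and Xb_ne: "\<And>i. Xb i \<noteq> {}" and Xb_closed: "\<And>i. closed (Xb i)"
    and Xb_convex: "\<And>i. convex (Xb i)"
    and \<Phi>_meas: "\<And>i. (\<lambda>p. \<Phi> i (fst p) (snd p)) \<in> borel_measurable (borel \<Otimes>\<^sub>M S)"
    and \<zeta>_meas: "\<And>i. \<zeta> i \<in> M \<rightarrow>\<^sub>M S"
    and F_exp_int: "\<And>i y. y \<in> X \<Longrightarrow> integrable M (\<lambda>\<omega>. \<Phi> i y (\<zeta> i \<omega>))"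
    and F_exp: "\<And>i y. y \<in> X \<Longrightarrow>
                   blockproj blk i (F y) = blockproj blk i (\<integral>\<omega>. \<Phi> i y (\<zeta> i \<omega>) \<partial>M)"
    and L_pos: "L > 0"
    and F_lip: "\<And>y z. y \<in> X \<Longrightarrow> z \<in> X \<Longrightarrow> norm (F y - F z) \<le> L * norm (y - z)"
    and \<eta>_pos: "\<eta> > 0"
    and F_smon: "\<And>y z. y \<in> X \<Longrightarrow> z \<in> X \<Longrightarrow> (F y - F z) \<bullet> (y - z) \<ge> \<eta> * (norm (y - z))\<^sup>2"
    and xs_sol: "VI_sol X F xs"
    and \<xi>_meas: "\<And>k i. \<xi> k i \<in> M \<rightarrow>\<^sub>M S"
    and x0_meas: "x 0 \<in> borel_measurable M"
    and x0_in: "\<And>\<omega>. \<omega> \<in> space M \<Longrightarrow> x 0 \<omega> \<in> X"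
    and x0_sq: "integrable M (\<lambda>\<omega>. (norm (x 0 \<omega>))\<^sup>2)"
    and x0_indep: "prob_space.indep_set M
                     (sigma_sets (space M) {x 0 -` A \<inter> space M | A. A \<in> sets borel})
                     (sigma_sets (space M) {\<xi> k i -` B \<inter> space M | k i B. B \<in> sets S})"
    and \<gamma>_pos: "\<And>k i. \<gamma> k i > 0"
    and w_def: "\<And>k i \<omega>. w k i \<omega> = blockproj blk i (\<Phi> i (x k \<omega>) (\<xi> k i \<omega>)) - blockproj blk i (F (x k \<omega>))"
    and x_rec: "\<And>k i \<omega>. \<omega> \<in> space M \<Longrightarrow> blockproj blk i (x (Suc k) \<omega>) =
                  closest_point (Xb i) (blockproj blk i (x k \<omega>) - \<gamma> k i *\<^sub>R (blockproj blk i (F (x k \<omega>)) + w k i \<omega>))"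
    and w_int: "\<And>k i c. integrable M (\<lambda>\<omega>. w k i \<omega> $ c)"
    and w_mean0: "\<And>k i c. AE \<omega> in M. real_cond_exp M (Fk k) (\<lambda>\<omega>. w k i \<omega> $ c) \<omega> = 0"
    and \<nu>_pos: "\<nu> > 0"
    and w_sq_int: "\<And>k. integrable M (\<lambda>\<omega>. (norm (\<Sum>i\<in>UNIV. w k i \<omega>))\<^sup>2)"
    and w_var: "\<And>k. AE \<omega> in M. real_cond_exp M (Fk k) (\<lambda>\<omega>. (norm (\<Sum>i\<in>UNIV. w k i \<omega>))\<^sup>2) \<omega> \<le> \<nu>\<^sup>2"
    and \<delta>_pos: "\<And>k. \<delta> k > 0" and \<Gamma>_pos: "\<And>k. \<Gamma> k > 0"
    and \<delta>_le: "\<And>k i. \<delta> k \<le> \<gamma> k i" and \<Gamma>_ge: "\<And>k i. \<gamma> k i \<le> \<Gamma> k"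
  shows "(AE \<omega> in M. \<forall>k.
            real_cond_exp M (Fk k) (\<lambda>\<omega>. (norm (x (Suc k) \<omega> - xs))\<^sup>2) \<omega>
              \<le> (1 - 2 * (\<eta> + L) * \<delta> k + 2 * L * \<Gamma> k + L\<^sup>2 * (\<Gamma> k)\<^sup>2) * (norm (x k \<omega> - xs))\<^sup>2
                 + (\<Gamma> k)\<^sup>2 * \<nu>\<^sup>2)
       \<and> (\<forall>\<beta>::real. (\<forall>k. (\<Gamma> k - \<delta> k) / \<delta> k \<le> \<beta>) \<and> 0 \<le> \<beta> \<and> \<beta> < \<eta> / L \<longrightarrow>
            (\<forall>k. (\<integral>\<omega>. (norm (x (Suc k) \<omega> - xs))\<^sup>2 \<partial>M)
                 \<le> (1 - 2 * (\<eta> - \<beta> * L) * \<delta> k + (1 + \<beta>)\<^sup>2 * L\<^sup>2 * (\<delta> k)\<^sup>2)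
                      * (\<integral>\<omega>. (norm (x k \<omega> - xs))\<^sup>2 \<partial>M)
                   + (1 + \<beta>)\<^sup>2 * (\<delta> k)\<^sup>2 * \<nu>\<^sup>2))"
proof -
  interpret cartesian_SA M S blk Xb F \<Phi> \<xi> x w \<gamma> \<delta> \<Gamma> L \<eta> \<nu> xs
    by (intro cartesian_SA.intro cartesian_SA_axioms.intro M) (fact assms[unfolded X_def Fk_def])+
  have "AE \<omega> in M. \<forall>k. real_cond_exp M (Fk k) (\<lambda>\<omega>. (norm (x (Suc k) \<omega> - xs))\<^sup>2) \<omega>
      \<le> (1 - 2 * (\<eta> + L) * \<delta> k + 2 * L * \<Gamma> k + L\<^sup>2 * (\<Gamma> k)\<^sup>2) * (norm (x k \<omega> - xs))\<^sup>2
         + (\<Gamma> k)\<^sup>2 * \<nu>\<^sup>2"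
    unfolding AE_all_countable Fk_def using conditional_bound by blast
  then show ?thesis
    using expected_bound by blast
qed

end
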